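(* Let $k,\ell\ge0$, $\pi_1\in\mathcal{T}_k$, $\pi_2\in\mathcal{T}_\ell$, where $\mathcal{T}_0=\{\epsilon\}$. Let $\pi=C_1(\pi_1,\pi_2)=\pi_1\cdot(k+\ell+1)\cdot\pi_2^{+k}$. Then $\pi\in\mathcal{T}_{k+\ell+1}$, and $\operatorname{slmax}(\pi)=\operatorname{slmax}(\pi_1)+\operatorname{slmax}(\pi_2)+1$.
   Context: For a finite sequence $A$ of distinct integers, the stack-sorting operator $\mathcal{S}$ is defined by $\mathcal{S}(\epsilon)=\epsilon$ for the empty sequence and, if $A$ is non-empty with largest element $m$, writing $A=A_L\cdot(m)\cdot A_R$ (concatenation), $\mathcal{S}(A)=\mathcal{S}(A_L)\cdot\mathcal{S}(A_R)\cdot(m)$. For $n\ge1$, $\mathcal{T}_n$ is the set of permutations $\sigma\in\mathfrak{S}_n$ (viewed as sequences) with $\mathcal{S}(\mathcal{S}(\sigma))$ equal to the identity (two-stack sortable permutations). For a sequence $\tau$, $\tau^{+k}$ is obtained by adding $k$ to each element. For a permutation $\sigma$, $\operatorname{slmax}(\sigma)$ is the number of left-to-right maxima of $\mathcal{S}(\sigma)$ (indices $i$ such that $\mathcal{S}(\sigma)(i)>\mathcal{S}(\sigma)(j)$ for all $j<i$), with $\operatorname{slmax}(\epsilon)=0$. *)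

theory Defs
  imports Main
begin

function stack_sort :: "int list \<Rightarrow> int list" where
  "stack_sort A =
     (if A = [] then []
      else (let m = Max (set A);
                AL = takeWhile (\<lambda>x. x \<noteq> m) A;
                AR = tl (dropWhile (\<lambda>x. x \<noteq> m) A)
            in stack_sort AL @ stack_sort AR @ [m]))"
  by pat_completeness auto
termination
proof (relation "measure length")
  show "wf (measure length)" by simp
next
  fix A :: "int list" and m AL
  assume "A \<noteq> []" "m = Max (set A)" "AL = takeWhile (\<lambda>x. x \<noteq> m) A"
  then show "(AL, A) \<in> measure length"
  proof -
    have "m \<in> set A" using \<open>A \<noteq> []\<close> \<open>m = Max (set A)\<close> by simp
    then have "length (takeWhile (\<lambda>x. x \<noteq> m) A) < length A"
      by (induction A) auto
    then show ?thesis using \<open>AL = _\<close> by simp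
  qed
next
  fix A :: "int list" and m AL AR
  assume "A \<noteq> []" "m = Max (set A)" "AR = tl (dropWhile (\<lambda>x. x \<noteq> m) A)"
  then show "(AR, A) \<in> measure length"
  proof -
    have "length (dropWhile (\<lambda>x. x \<noteq> m) A) \<le> length A"
      by (rule length_dropWhile_le)
    moreover have "m \<in> set A" using \<open>A \<noteq> []\<close> \<open>m = Max (set A)\<close> by simp
    then have "dropWhile (\<lambda>x. x \<noteq> m) A \<noteq> []" by (induction A) auto
    ultimately show ?thesis using \<open>AR = _\<close> by (cases "dropWhile (\<lambda>x. x \<noteq> m) A") auto
  qed
qed

declare stack_sort.simps [simp del]

definition perm_seq :: "nat \<Rightarrow> int list \<Rightarrow> bool" where
  "perm_seq n \<sigma> \<longleftrightarrow> distinct \<sigma> \<and> set \<sigma> = {1..int n}"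

definition two_stack_sortable :: "nat \<Rightarrow> int list set" where
  "two_stack_sortable n = {\<sigma>. perm_seq n \<sigma> \<and> stack_sort (stack_sort \<sigma>) = [1..int n]}"

definition shift :: "int \<Rightarrow> int list \<Rightarrow> int list" where
  "shift k \<tau> = map (\<lambda>x. x + k) \<tau>"

definition lr_maxima :: "int list \<Rightarrow> nat" where
  "lr_maxima s = card {i. i < length s \<and> (\<forall>j<i. s ! j < s ! i)}"

definition slmax :: "int list \<Rightarrow> nat" where
  "slmax \<sigma> = lr_maxima (stack_sort \<sigma>)"

end

theory Submission
  imports Defs
begin

text \<open>Every element of \<open>\<pi>1\<close> lies below every element of the shifted \<open>\<pi>2\<close>, and
\<open>k + l + 1\<close> exceeds both. The stack-sorting operator splits at that maximum and is
additive on such separated concatenations, so \<open>S(\<pi>) = S(\<pi>1) S(\<pi>2)\<^sup>+\<^sup>k (k+l+1)\<close>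
and a second pass gives \<open>SS(\<pi>1) SS(\<pi>2)\<^sup>+\<^sup>k (k+l+1)\<close>, which is the identity.
The number of left-to-right maxima is likewise additive on separated
concatenations and invariant under shifts.\<close>

lemma stack_sort_Nil [simp]: "stack_sort [] = []"
  by (subst stack_sort.simps) simp

lemma stack_sort_split_max:
  assumes "\<forall>x\<in>set A. x < m" and "\<forall>x\<in>set B. x \<le> m"
  shows "stack_sort (A @ m # B) = stack_sort A @ stack_sort B @ [m]"
proof -
  have "Max (set (A @ m # B)) = m"
    using assms by (intro Max_eqI) auto
  moreover have "takeWhile (\<lambda>x. x \<noteq> m) (A @ m # B) = A"
    using assms(1) by (subst takeWhile_append2) auto
  moreover have "dropWhile (\<lambda>x. x \<noteq> m) (A @ m # B) = m # B"
    using assms(1) by (subst dropWhile_append2) auto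
  ultimately show ?thesis
    by (subst stack_sort.simps) (simp add: Let_def)
qed

lemma stack_sort_induct [case_names Nil split_max]:
  fixes P :: "int list \<Rightarrow> bool"
  assumes Nil: "P []"
    and split_max: "\<And>A m B. \<forall>x\<in>set A. x < m \<Longrightarrow> \<forall>x\<in>set B. x \<le> m \<Longrightarrow>
      P A \<Longrightarrow> P B \<Longrightarrow> P (A @ m # B)"
  shows "P C"
proof (induction C rule: length_induct)
  case (1 C)
  show ?case
  proof (cases "C = []")
    case True
    then show ?thesis using Nil by simp
  next
    case False
    define m where "m = Max (set C)"
    define A where "A = takeWhile (\<lambda>x. x \<noteq> m) C"
    define B where "B = tl (dropWhile (\<lambda>x. x \<noteq> m) C)"
    have "m \<in> set C"
      using False by (simp add: m_def)
    then have "dropWhile (\<lambda>x. x \<noteq> m) C = m # B"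
      unfolding B_def by (induction C) auto
    then have C: "C = A @ m # B"
      unfolding A_def by (metis takeWhile_dropWhile_id)
    have "\<forall>x\<in>set A. x < m"
      using False unfolding A_def m_def
      by (metis List.finite_set Max_ge order.not_eq_order_implies_strict set_takeWhileD)
    moreover have "\<forall>x\<in>set C. x \<le> m"
      by (simp add: m_def)
    then have "\<forall>x\<in>set B. x \<le> m"
      by (subst (asm) C) simp
    moreover have "length A < length C" and "length B < length C"
      by (subst C, simp)+
    then have "P A" and "P B"
      using "1.IH" by simp_all
    ultimately show ?thesis
      using split_max C by simp
  qed
qed

lemma set_stack_sort [simp]: "set (stack_sort A) = set A"
  by (induction A rule: stack_sort_induct) (auto simp: stack_sort_split_max)

lemma stack_sort_map_strict_mono:
  assumes "strict_mono f"
  shows "stack_sort (map f A) = map f (stack_sort A)"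
proof (induction A rule: stack_sort_induct)
  case Nil
  then show ?case by simp
next
  case (split_max A m B)
  then have "\<forall>x\<in>set (map f A). x < f m" and "\<forall>x\<in>set (map f B). x \<le> f m"
    using assms by (auto simp: strict_mono_less strict_mono_less_eq)
  then show ?case
    using split_max by (simp add: stack_sort_split_max)
qed

lemma stack_sort_append_separated:
  assumes "\<forall>a\<in>set A. \<forall>b\<in>set B. a < b"
  shows "stack_sort (A @ B) = stack_sort A @ stack_sort B"
  using assms
proof (induction B arbitrary: A rule: stack_sort_induct)
  case Nil
  then show ?case by simp
next
  case (split_max BL m BR)
  have "\<forall>x\<in>set (A @ BL). x < m"
    using split_max.hyps(1) split_max.prems by auto
  then have "stack_sort ((A @ BL) @ m # BR) = stack_sort (A @ BL) @ stack_sort BR @ [m]"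
    using split_max.hyps(2) by (rule stack_sort_split_max)
  then show ?case
    using split_max.IH(1)[of A] split_max by (simp add: stack_sort_split_max)
qed

lemma lr_maxima_Nil: "lr_maxima [] = 0"
  by (simp add: lr_maxima_def)

lemma lr_maxima_snoc:
  "lr_maxima (xs @ [x]) = lr_maxima xs + (if \<forall>y\<in>set xs. y < x then 1 else 0)"
proof -
  let ?S = "\<lambda>s. {i. i < length s \<and> (\<forall>j<i. s ! j < s ! i)}"
  have "(\<forall>j<length xs. xs ! j < x) \<longleftrightarrow> (\<forall>y\<in>set xs. y < x)"
    by (simp add: all_set_conv_all_nth)
  then have "?S (xs @ [x]) = ?S xs \<union> (if \<forall>y\<in>set xs. y < x then {length xs} else {})"
    by (auto simp: nth_append less_Suc_eq)
  moreover have "length xs \<notin> ?S xs" and "finite (?S xs)"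
    by auto
  ultimately show ?thesis
    unfolding lr_maxima_def by simp
qed

lemma lr_maxima_map_strict_mono:
  assumes "strict_mono f"
  shows "lr_maxima (map f xs) = lr_maxima xs"
  by (induction xs rule: rev_induct)
    (simp_all add: lr_maxima_Nil lr_maxima_snoc strict_mono_less[OF assms])

lemma lr_maxima_append_separated:
  assumes "\<forall>a\<in>set A. \<forall>b\<in>set B. a < b"
  shows "lr_maxima (A @ B) = lr_maxima A + lr_maxima B"
  using assms
proof (induction B rule: rev_induct)
  case Nil
  then show ?case by (simp add: lr_maxima_Nil)
next
  case (snoc x B)
  then have "(\<forall>y\<in>set (A @ B). y < x) \<longleftrightarrow> (\<forall>y\<in>set B. y < x)"
    by auto
  then show ?case
    using snoc by (simp add: lr_maxima_snoc flip: append_assoc)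
qed

lemma map_add_upto: "map (\<lambda>x. x + c) [a..b] = [a + c..b + c]"
  by (rule nth_equalityI) simp_all

lemma upto_append_upto_snoc:
  assumes "i \<le> j + 1" and "j \<le> k"
  shows "[i..j] @ [j + 1..k] @ [k + 1] = [i..k + 1]"
  using assms upto_split1[of i "j + 1" "k + 1"] upto_rec2[of "j + 1" "k + 1"] by simp

theorem proposition5:
  fixes k l :: nat and \<pi>1 \<pi>2 :: "int list"
  assumes "\<pi>1 \<in> two_stack_sortable k" and "\<pi>2 \<in> two_stack_sortable l"
  defines "\<pi> \<equiv> \<pi>1 @ [int (k + l + 1)] @ shift (int k) \<pi>2"
  shows "\<pi> \<in> two_stack_sortable (k + l + 1)
         \<and> slmax \<pi> = slmax \<pi>1 + slmax \<pi>2 + 1"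
proof -
  let ?m = "int (k + l + 1)" and ?sh = "map (\<lambda>x. x + int k)"
  have mono: "strict_mono (\<lambda>x. x + int k)"
    by (rule strict_mono_add)
  have \<pi>1: "distinct \<pi>1" "set \<pi>1 = {1..int k}" "stack_sort (stack_sort \<pi>1) = [1..int k]"
    and \<pi>2: "distinct \<pi>2" "set \<pi>2 = {1..int l}" "stack_sort (stack_sort \<pi>2) = [1..int l]"
    using assms(1,2) by (auto simp: two_stack_sortable_def perm_seq_def)
  have set_sh: "set (?sh \<pi>2) = {int k + 1..int k + int l}"
    using \<pi>2(2) by (force simp: image_iff intro: bexI[where x = "_ - int k"])
  have \<pi>_eq: "\<pi> = \<pi>1 @ ?m # ?sh \<pi>2"
    by (simp add: \<pi>_def shift_def)
  have sep: "\<forall>a\<in>set (stack_sort \<pi>1). \<forall>b\<in>set (stack_sort (?sh \<pi>2)). a < b"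
    and below: "\<forall>x\<in>set (stack_sort \<pi>1 @ stack_sort (?sh \<pi>2)). x < ?m"
    using \<pi>1(2) set_sh by auto
  have "\<forall>x\<in>set \<pi>1. x < ?m" and "\<forall>x\<in>set (?sh \<pi>2). x \<le> ?m"
    using \<pi>1(2) set_sh by auto
  then have S\<pi>: "stack_sort \<pi> = (stack_sort \<pi>1 @ stack_sort (?sh \<pi>2)) @ [?m]"
    unfolding \<pi>_eq by (simp add: stack_sort_split_max)
  have "stack_sort (stack_sort \<pi>) = [1..int k] @ [int k + 1..int k + int l] @ [int k + int l + 1]"
    using stack_sort_split_max[OF below] stack_sort_append_separated[OF sep] \<pi>1(3) \<pi>2(3)
    by (simp add: S\<pi> stack_sort_map_strict_mono[OF mono] map_add_upto add.commute)
  also have "\<dots> = [1..?m]"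
    using upto_append_upto_snoc[of 1 "int k" "int k + int l"] by (simp add: ac_simps)
  finally have sorted: "stack_sort (stack_sort \<pi>) = [1..?m]" .
  have "slmax \<pi> = lr_maxima (stack_sort \<pi>1 @ stack_sort (?sh \<pi>2)) + 1"
    using below unfolding slmax_def S\<pi> lr_maxima_snoc by simp
  also have "\<dots> = slmax \<pi>1 + slmax \<pi>2 + 1"
    using lr_maxima_append_separated[OF sep]
    by (simp add: slmax_def stack_sort_map_strict_mono[OF mono] lr_maxima_map_strict_mono[OF mono])
  finally have "slmax \<pi> = slmax \<pi>1 + slmax \<pi>2 + 1" .
  moreover have "perm_seq (k + l + 1) \<pi>"
    using \<pi>1(1,2) \<pi>2(1) set_sh by (auto simp: perm_seq_def \<pi>_eq distinct_map)
  ultimately show ?thesis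
    using sorted by (simp add: two_stack_sortable_def)
qed

end
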